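(* For either choice $\zeta\in\{q,-q^3\}$, the function $\bar{\mathcal{F}}(v_1,v_2\mid\lambda_1,\dots,\lambda_{L-1})=\langle\bar0|\mathcal{B}(v_2)\mathcal{B}(v_1)\mathcal{E}(\lambda_{L-1})\cdots\mathcal{E}(\lambda_1)|0\rangle$ vanishes whenever $y_2=e^{2v_2}=e^{2\mu_j}$ for some $1\le j\le L$.
   Context: Let $q\in\mathbb{C}\setminus\{0\}$ (with a fixed choice of $q^{1/2}$) and $\zeta\in\{q,-q^3\}$ ($\zeta=q$: Fateev–Zamolodchikov model; $\zeta=-q^3$: Izergin–Korepin model). For $\lambda\in\mathbb{C}$ put $x=e^{2\lambda}$ and define $a(\lambda)=(x-\zeta)(x-q^2)$, $b(\lambda)=q(x-1)(x-\zeta)$, $c(\lambda)=(1-q^2)(x-\zeta)$, $\bar c(\lambda)=x(1-q^2)(x-\zeta)$, and for $\alpha,\beta\in\{1,2,3\}$, with $\beta'=4-\beta$: $d_{\alpha,\beta}(\lambda)=q(x-1)(x-\zeta)+x(q^2-1)(\zeta-1)$ if $\alpha=\beta=2$; $d_{\alpha,\beta}(\lambda)=(x-1)[(x-\zeta)+x(q^2-1)]$ if $\alpha=\beta\neq 2$; $d_{\alpha,\beta}(\lambda)=(q^2-1)[\zeta(x-1)q^{(\alpha-\beta)/2}-\delta_{\alpha,\beta'}(x-\zeta)]$ if $\alpha<\beta$; $d_{\alpha,\beta}(\lambda)=x(q^2-1)[(x-1)q^{(\alpha-\beta)/2}-\delta_{\alpha,\beta'}(x-\zeta)]$ if $\alpha>\beta$.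 Let $e_1,e_2,e_3$ be the standard basis of $\mathbb{C}^3$ and $E_{\alpha,\beta}$ the unit matrices. Define $\mathcal{R}(\lambda)\in\mathrm{End}(\mathbb{C}^3\otimes\mathbb{C}^3)$ as the $9\times 9$ matrix in the ordered basis $e_1\otimes e_1,e_1\otimes e_2,e_1\otimes e_3,e_2\otimes e_1,e_2\otimes e_2,e_2\otimes e_3,e_3\otimes e_1,e_3\otimes e_2,e_3\otimes e_3$ (indices $1,\dots,9$) whose only nonzero entries (row, column) are: $(1,1)=a$; $(2,2)=b$, $(2,4)=c$; $(3,3)=d_{1,1}$, $(3,5)=d_{1,2}$, $(3,7)=d_{1,3}$; $(4,2)=\bar c$, $(4,4)=b$; $(5,3)=d_{2,1}$, $(5,5)=d_{2,2}$, $(5,7)=d_{2,3}$; $(6,6)=b$, $(6,8)=c$; $(7,3)=d_{3,1}$, $(7,5)=d_{3,2}$, $(7,7)=d_{3,3}$; $(8,6)=\bar c$, $(8,8)=b$; $(9,9)=a$ (all evaluated at $\lambda$). Fix $L\ge1$ and inhomogeneities $\mu_1,\dots,\mu_L\in\mathbb{C}$. With $V_a=V_1=\dots=V_L=\mathbb{C}^3$, let $\mathcal{T}(\lambda)=\mathcal{R}_{a1}(\lambda-\mu_1)\cdots\mathcal{R}_{aL}(\lambda-\mu_L)$, where $\mathcal{R}_{aj}$ acts as $\mathcal{R}$ on $V_a\otimes V_j$. Write $\mathcal{T}(\lambda)=\sum_{\alpha,\beta}E_{\alpha,\beta}\otimes\mathcal{T}_\alpha^\beta(\lambda)$ and set $\mathcal{B}(\lambda)=\mathcal{T}_1^2(\lambda)$,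 $\mathcal{E}(\lambda)=\mathcal{T}_1^3(\lambda)$, operators on $V_1\otimes\cdots\otimes V_L$. Let $|0\rangle=e_1^{\otimes L}$ and let $\langle\bar0|$ be the dual vector of $e_3^{\otimes L}$. *)

theory Defs
  imports "HOL-Analysis.Analysis"
begin

text \<open>Parameters: q (nonzero), r a fixed square root of q (r^2 = q), so that
  q^((alpha-beta)/2) = r powi (alpha - beta); z is zeta.  Spectral parameter lam, x = exp(2 lam).\<close>

definition d_fun :: "complex \<Rightarrow> complex \<Rightarrow> complex \<Rightarrow> complex \<Rightarrow> nat \<Rightarrow> nat \<Rightarrow> complex" where
  "d_fun q r z x al be =
    (if al = 2 \<and> be = 2 then q*(x-1)*(x-z) + x*(q^2-1)*(z-1)
     else if al = be then (x-1)*((x-z) + x*(q^2-1))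
     else if al < be then (q^2-1)*(z*(x-1)*r powi (int al - int be)
                           - (if al = 4 - be then 1 else 0)*(x-z))
     else x*(q^2-1)*((x-1)*r powi (int al - int be) - (if al = 4 - be then 1 else 0)*(x-z)))"

definition Rmat :: "complex \<Rightarrow> complex \<Rightarrow> complex \<Rightarrow> complex \<Rightarrow> nat \<Rightarrow> nat \<Rightarrow> complex" where
  "Rmat q r z lam i j =
    (let x = exp (2*lam);
         a = (x-z)*(x-q^2); b = q*(x-1)*(x-z); c = (1-q^2)*(x-z); cb = x*(1-q^2)*(x-z);
         d = d_fun q r z x
     in if (i,j) = (1,1) then a
     else if (i,j) = (2,2) then b else if (i,j) = (2,4) then c
     else if (i,j) = (3,3) then d 1 1 else if (i,j) = (3,5) then d 1 2 else if (i,j) = (3,7) then d 1 3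
     else if (i,j) = (4,2) then cb else if (i,j) = (4,4) then b
     else if (i,j) = (5,3) then d 2 1 else if (i,j) = (5,5) then d 2 2 else if (i,j) = (5,7) then d 2 3
     else if (i,j) = (6,6) then b else if (i,j) = (6,8) then c
     else if (i,j) = (7,3) then d 3 1 else if (i,j) = (7,5) then d 3 2 else if (i,j) = (7,7) then d 3 3
     else if (i,j) = (8,6) then cb else if (i,j) = (8,8) then b
     else if (i,j) = (9,9) then a else 0)"

text \<open>Entry of R(lam) between row e_al \<otimes> e_s and column e_be \<otimes> e_s' (al,s,be,s' in {1,2,3}).\<close>
definition Rent :: "complex \<Rightarrow> complex \<Rightarrow> complex \<Rightarrow> complex \<Rightarrow> nat \<Rightarrow> nat \<Rightarrow> nat \<Rightarrow> nat \<Rightarrow> complex" where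
  "Rent q r z lam al s be s' = Rmat q r z lam (3*(al-1)+s) (3*(be-1)+s')"

text \<open>Basis configurations of V_1 \<otimes> ... \<otimes> V_L: s = [s_1,...,s_L] stands for e_{s_1} \<otimes> ... \<otimes> e_{s_L}.\<close>
definition configs :: "nat \<Rightarrow> nat list set" where
  "configs n = {s. length s = n \<and> set s \<subseteq> {1,2,3}}"

text \<open>Matrix entry (row s, column s') of the operator T_al^be(lam) on V_1 \<otimes> ... \<otimes> V_L,
  T(lam) = R_{a1}(lam - mu_1) ... R_{aL}(lam - mu_L); the list a collects the auxiliary indices
  a_0 = al, a_1, ..., a_L = be.\<close>
definition Tent :: "complex \<Rightarrow> complex \<Rightarrow> complex \<Rightarrow> nat \<Rightarrow> (nat \<Rightarrow> complex) \<Rightarrow> nat \<Rightarrow> nat \<Rightarrow> complex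
    \<Rightarrow> nat list \<Rightarrow> nat list \<Rightarrow> complex" where
  "Tent q r z L mu al be lam s s' =
    (\<Sum>a\<in>{a \<in> configs (Suc L). a ! 0 = al \<and> a ! L = be}.
       \<Prod>j<L. Rent q r z (lam - mu (Suc j)) (a ! j) (s ! j) (a ! Suc j) (s' ! j))"

definition op_apply :: "nat \<Rightarrow> (nat list \<Rightarrow> nat list \<Rightarrow> complex) \<Rightarrow> (nat list \<Rightarrow> complex) \<Rightarrow> (nat list \<Rightarrow> complex)" where
  "op_apply L M v = (\<lambda>s. \<Sum>s'\<in>configs L. M s s' * v s')"

definition vac :: "nat \<Rightarrow> nat list \<Rightarrow> complex" where
  "vac L = (\<lambda>s. if s = replicate L 1 then 1 else 0)"

text \<open>\<langle>0bar| B(v2) B(v1) E(lam_{L-1}) ... E(lam_1) |0\<rangle>, with B = T_1^2, E = T_1^3.\<close>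
definition Fbar :: "complex \<Rightarrow> complex \<Rightarrow> complex \<Rightarrow> nat \<Rightarrow> (nat \<Rightarrow> complex) \<Rightarrow> complex \<Rightarrow> complex
    \<Rightarrow> (nat \<Rightarrow> complex) \<Rightarrow> complex" where
  "Fbar q r z L mu v1 v2 lam =
    (let Eops = foldl (\<lambda>w k. op_apply L (Tent q r z L mu 1 3 (lam k)) w) (vac L) [1..<L];
         w = op_apply L (Tent q r z L mu 1 2 v2) (op_apply L (Tent q r z L mu 1 2 v1) Eops)
     in w (replicate L 3))"

end

theory Submission
  imports Defs
begin

(* Only the R-matrix rows with physical index 3 (rows 3, 6, 9) enter <0bar| T_al^be(lam).
   Along these rows the auxiliary index can only increase, so every path contributing to
   <0bar| B(v2) stays in {1,2}; on that block every entry of R carries the factor x - 1.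
   Hence the factor at site j vanishes when exp(2 v2) = exp(2 mu_j), and <0bar| B(v2) = 0
   as a covector, whatever q, r and z are. *)

lemma configs_nth:
  assumes "s \<in> configs n" and "k < n"
  shows "s ! k \<in> {1, 2, 3}"
proof -
  have "s ! k \<in> set s"
    using assms by (simp add: configs_def)
  then show ?thesis
    using assms(1) by (auto simp: configs_def)
qed

lemma Rent_row3_nonzero_imp_le:
  assumes "al \<in> {1, 2, 3}" and "be \<in> {1, 2, 3}" and "s' \<in> {1, 2, 3}"
    and "Rent q r z lam al 3 be s' \<noteq> 0"
  shows "al \<le> be"
  using assms unfolding Rent_def by (elim insertE emptyE; simp add: Rmat_def)

lemma Rent_row3_block12_eq_0:
  assumes "al \<in> {1, 2}" and "be \<in> {1, 2}" and "s' \<in> {1, 2, 3}"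
    and "exp (2 * lam) = 1"
  shows "Rent q r z lam al 3 be s' = 0"
  using assms unfolding Rent_def by (elim insertE emptyE; simp add: Rmat_def d_fun_def)

lemma Tent_top_row_eq_0:
  assumes "be \<le> 2" and "1 \<le> j" and "j \<le> L" and "exp (2 * (lam - mu j)) = 1"
    and s': "s' \<in> configs L"
  shows "Tent q r z L mu al be lam (replicate L 3) s' = 0"
  unfolding Tent_def
proof (rule sum.neutral, rule ballI)
  fix a assume a: "a \<in> {a \<in> configs (Suc L). a ! 0 = al \<and> a ! L = be}"
  define R where "R k = Rent q r z (lam - mu (Suc k)) (a ! k) 3 (a ! Suc k) (s' ! k)" for k
  define i where "i = j - 1"
  have i: "i < L" "Suc i = j"
    using assms(2,3) by (auto simp: i_def)
  have a_nth: "a ! k \<in> {1, 2, 3}" if "k \<le> L" for k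
    using a that by (intro configs_nth[of a "Suc L"]) auto
  have "\<exists>k<L. R k = 0"
  proof (rule ccontr)
    assume "\<not> (\<exists>k<L. R k = 0)"
    then have step: "a ! k \<le> a ! Suc k" if "k < L" for k
    proof -
      have "k \<le> L" "Suc k \<le> L" "R k \<noteq> 0"
        using that \<open>\<not> (\<exists>k<L. R k = 0)\<close> by auto
      then show ?thesis
        unfolding R_def
        by (rule Rent_row3_nonzero_imp_le[OF a_nth a_nth configs_nth[OF s' that]])
    qed
    have "a ! Suc i \<le> a ! L"
      using i step by (auto intro: lift_Suc_mono_le_ivl[of "{..<L}" "(!) a"])
    then have "a ! Suc i \<le> 2" "a ! i \<le> 2"
      using a assms(1) step[OF i(1)] by auto
    moreover have "exp (2 * (lam - mu (Suc i))) = 1"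
      using i(2) assms(4) by simp
    ultimately have "R i = 0"
      unfolding R_def using a_nth[of i] a_nth[of "Suc i"] i(1)
      by (intro Rent_row3_block12_eq_0 configs_nth[OF s' i(1)]) auto
    with i(1) \<open>\<not> (\<exists>k<L. R k = 0)\<close> show False by blast
  qed
  then have "(\<Prod>k<L. R k) = 0"
    by auto
  then show "(\<Prod>k<L. Rent q r z (lam - mu (Suc k)) (a ! k) (replicate L 3 ! k) (a ! Suc k) (s' ! k)) = 0"
    by (simp add: R_def)
qed

theorem lemma2p5:
  fixes q r z v1 v2 :: complex and L :: nat and mu lam :: "nat \<Rightarrow> complex"
  assumes "q \<noteq> 0" and "r ^ 2 = q" and "z = q \<or> z = - (q ^ 3)" and "L \<ge> 1"
    and "j \<ge> 1" and "j \<le> L" and "exp (2 * v2) = exp (2 * mu j)"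
  shows "Fbar q r z L mu v1 v2 lam = 0"
proof -
  have "exp (2 * (v2 - mu j)) = 1"
    using assms(7) by (simp add: right_diff_distrib exp_diff)
  then have "Tent q r z L mu 1 2 v2 (replicate L 3) s' = 0" if "s' \<in> configs L" for s'
    using assms(5,6) that by (intro Tent_top_row_eq_0) auto
  then show ?thesis
    unfolding Fbar_def Let_def op_apply_def by (simp add: sum.neutral del: One_nat_def)
qed

end
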